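(* For all integers $a,d\ge1$, the distributive lattice $J(P_{a,1,1,d})$ is tCDE with edge density $\mathbb{E}(\mathrm{uni}_{J(P_{a,1,1,d})};\mathrm{ddeg})=1$.
   Context: $P_{a,1,1,d}$ is the poset on elements $w_1,\ldots,w_a,x_1,y_1,z_1,\ldots,z_d$ whose cover relations are $w_1\lessdot w_2\lessdot\cdots\lessdot w_a$, $w_a\lessdot x_1$, $w_a\lessdot y_1$, $x_1\lessdot z_1$, $y_1\lessdot z_1$, $z_1\lessdot z_2\lessdot\cdots\lessdot z_d$. $J(P)$ is the lattice of order ideals of $P$ ordered by inclusion; $\mathrm{ddeg}$ is the number of covered elements; $\mathrm{uni}$ is uniform. $\mathcal{T}^+_p(I)=1$ iff $p\notin I$ and $p$ is minimal in $P\setminus I$; $\mathcal{T}^-_p(I)=1$ iff $p\in I$ and $p$ is maximal in $I$ (else $0$). $\mu$ on $J(P)$ is toggle-symmetric if $\mathbb{E}(\mu;\mathcal{T}^+_p)=\mathbb{E}(\mu;\mathcal{T}^-_p)$ for all $p$; $J(P)$ is tCDE if $\mathbb{E}(\mu;\mathrm{ddeg})=\mathbb{E}(\mathrm{uni}_{J(P)};\mathrm{ddeg})$ for every toggle-symmetric $\mu$. *)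

theory Defs
  imports Complex_Main
begin

text \<open>A finite poset is given by a carrier set Pc and an order relation le
  (only its restriction to Pc matters).\<close>

definition order_ideals :: "'a set \<Rightarrow> ('a \<Rightarrow> 'a \<Rightarrow> bool) \<Rightarrow> 'a set set" where
  "order_ideals Pc le = {I. I \<subseteq> Pc \<and> (\<forall>x\<in>I. \<forall>y\<in>Pc. le y x \<longrightarrow> y \<in> I)}"

definition J_covers :: "'a set \<Rightarrow> ('a \<Rightarrow> 'a \<Rightarrow> bool) \<Rightarrow> 'a set \<Rightarrow> 'a set \<Rightarrow> bool" where
  "J_covers Pc le K I \<longleftrightarrow> K \<in> order_ideals Pc le \<and> I \<in> order_ideals Pc le \<and> K \<subset> I \<and>
     \<not> (\<exists>L\<in>order_ideals Pc le. K \<subset> L \<and> L \<subset> I)"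

definition ddeg :: "'a set \<Rightarrow> ('a \<Rightarrow> 'a \<Rightarrow> bool) \<Rightarrow> 'a set \<Rightarrow> real" where
  "ddeg Pc le I = real (card {K. J_covers Pc le K I})"

definition toggle_plus :: "'a set \<Rightarrow> ('a \<Rightarrow> 'a \<Rightarrow> bool) \<Rightarrow> 'a \<Rightarrow> 'a set \<Rightarrow> real" where
  "toggle_plus Pc le p I =
     (if p \<in> Pc - I \<and> (\<forall>q\<in>Pc - I. le q p \<longrightarrow> q = p) then 1 else 0)"

definition toggle_minus :: "'a set \<Rightarrow> ('a \<Rightarrow> 'a \<Rightarrow> bool) \<Rightarrow> 'a \<Rightarrow> 'a set \<Rightarrow> real" where
  "toggle_minus Pc le p I =
     (if p \<in> I \<and> (\<forall>q\<in>I. le p q \<longrightarrow> q = p) then 1 else 0)"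

definition is_distribution :: "'a set \<Rightarrow> ('a \<Rightarrow> 'a \<Rightarrow> bool) \<Rightarrow> ('a set \<Rightarrow> real) \<Rightarrow> bool" where
  "is_distribution Pc le \<mu> \<longleftrightarrow>
     (\<forall>I\<in>order_ideals Pc le. 0 \<le> \<mu> I) \<and> (\<Sum>I\<in>order_ideals Pc le. \<mu> I) = 1"

definition expect :: "'a set \<Rightarrow> ('a \<Rightarrow> 'a \<Rightarrow> bool) \<Rightarrow> ('a set \<Rightarrow> real) \<Rightarrow> ('a set \<Rightarrow> real) \<Rightarrow> real" where
  "expect Pc le \<mu> f = (\<Sum>I\<in>order_ideals Pc le. \<mu> I * f I)"

definition uni :: "'a set \<Rightarrow> ('a \<Rightarrow> 'a \<Rightarrow> bool) \<Rightarrow> 'a set \<Rightarrow> real" where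
  "uni Pc le I = (if I \<in> order_ideals Pc le then 1 / real (card (order_ideals Pc le)) else 0)"

definition toggle_symmetric :: "'a set \<Rightarrow> ('a \<Rightarrow> 'a \<Rightarrow> bool) \<Rightarrow> ('a set \<Rightarrow> real) \<Rightarrow> bool" where
  "toggle_symmetric Pc le \<mu> \<longleftrightarrow>
     (\<forall>p\<in>Pc. expect Pc le \<mu> (toggle_plus Pc le p) = expect Pc le \<mu> (toggle_minus Pc le p))"

definition tCDE :: "'a set \<Rightarrow> ('a \<Rightarrow> 'a \<Rightarrow> bool) \<Rightarrow> bool" where
  "tCDE Pc le \<longleftrightarrow>
     (\<forall>\<mu>. is_distribution Pc le \<mu> \<and> toggle_symmetric Pc le \<mu> \<longrightarrow>
        expect Pc le \<mu> (ddeg Pc le) = expect Pc le (uni Pc le) (ddeg Pc le))"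

datatype pelem = W nat | X | Y | Z nat

definition P_carrier :: "nat \<Rightarrow> nat \<Rightarrow> pelem set" where
  "P_carrier a d = W ` {1..a} \<union> {X, Y} \<union> Z ` {1..d}"

definition P_cover :: "nat \<Rightarrow> nat \<Rightarrow> (pelem \<times> pelem) set" where
  "P_cover a d = {(W i, W (Suc i)) | i. 1 \<le> i \<and> i < a}
     \<union> {(W a, X), (W a, Y), (X, Z 1), (Y, Z 1)}
     \<union> {(Z j, Z (Suc j)) | j. 1 \<le> j \<and> j < d}"

definition P_le :: "nat \<Rightarrow> nat \<Rightarrow> pelem \<Rightarrow> pelem \<Rightarrow> bool" where
  "P_le a d x y \<longleftrightarrow> (x, y) \<in> (P_cover a d)\<^sup>*"

end

theory Submission
  imports Defs
begin

text \<open>The order ideals of P_{a,1,1,d} are the chain ideals W_0 = {}, ..., W_a, the two ideals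
  W_a + X and W_a + Y, and Z_0 = W_a + {X, Y}, ..., Z_d; every one of them has down-degree 1
  except W_0 (degree 0) and Z_0 (degree 2). As functions on J(P), the toggle differences
  T^+_{w_k} - T^-_{w_k} telescope to [I = W_0] - [I = W_a], and the half-sum of those at x and
  y equals [I = W_a] - [I = Z_0]. Hence ddeg = 1 minus a linear combination of toggle
  differences, whose expectation vanishes under every toggle-symmetric distribution; the
  uniform distribution is one, because adding p is a bijection from the ideals where p can be
  toggled in to those where it can be toggled out.\<close>

lemma rtrancl_chain:
  assumes "m \<le> n" "\<And>k. m \<le> k \<Longrightarrow> k < n \<Longrightarrow> (f k, f (Suc k)) \<in> R"
  shows "(f m, f n) \<in> R\<^sup>*"
  using assms by (induction n rule: dec_induct) (auto intro: rtrancl_into_rtrancl)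

lemma downclosed_subset_atLeastAtMost:
  fixes S :: "nat set"
  assumes "S \<subseteq> {1..n}" "\<And>i j. i \<in> S \<Longrightarrow> 1 \<le> j \<Longrightarrow> j \<le> i \<Longrightarrow> j \<in> S"
  shows "\<exists>k\<le>n. S = {1..k}"
  using assms
proof (induction n)
  case 0 then show ?case by auto
next
  case (Suc n)
  show ?case
  proof (cases "Suc n \<in> S")
    case True
    then have "S = {1..Suc n}" using Suc.prems by fastforce
    then show ?thesis by blast
  next
    case False
    then have "S \<subseteq> {1..n}" using Suc.prems(1) by (auto simp: le_Suc_eq)
    then show ?thesis using Suc.IH Suc.prems(2) le_SucI by blast
  qed
qed

lemma empty_in_order_ideals: "{} \<in> order_ideals Pc le"
  by (simp add: order_ideals_def)

lemma finite_order_ideals: "finite Pc \<Longrightarrow> finite (order_ideals Pc le)"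
  by (rule finite_subset[of _ "Pow Pc"]) (auto simp: order_ideals_def)

lemma is_distribution_uni:
  assumes "finite Pc"
  shows "is_distribution Pc le (uni Pc le)"
proof -
  have "card (order_ideals Pc le) \<noteq> 0"
    using assms empty_in_order_ideals finite_order_ideals by (metis card_0_eq empty_iff)
  then show ?thesis
    by (simp add: is_distribution_def uni_def)
qed

lemma toggle_plus_of_bool:
  "toggle_plus Pc le p I = of_bool (p \<in> Pc - I \<and> (\<forall>q\<in>Pc - I. le q p \<longrightarrow> q = p))"
  by (simp add: toggle_plus_def)

lemma toggle_minus_of_bool:
  "toggle_minus Pc le p I = of_bool (p \<in> I \<and> (\<forall>q\<in>I. le p q \<longrightarrow> q = p))"
  by (simp add: toggle_minus_def)

lemma bij_betw_insert_toggle: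
  assumes "p \<in> Pc"
  shows "bij_betw (insert p)
           {I \<in> order_ideals Pc le. toggle_plus Pc le p I = 1}
           {I \<in> order_ideals Pc le. toggle_minus Pc le p I = 1}"
proof (rule bij_betw_byWitness[where f' = "\<lambda>I. I - {p}"])
  show "\<forall>I\<in>{I \<in> order_ideals Pc le. toggle_plus Pc le p I = 1}. insert p I - {p} = I"
    by (auto simp: toggle_plus_def split: if_splits)
  show "\<forall>I\<in>{I \<in> order_ideals Pc le. toggle_minus Pc le p I = 1}. insert p (I - {p}) = I"
    by (auto simp: toggle_minus_def split: if_splits)
  show "insert p ` {I \<in> order_ideals Pc le. toggle_plus Pc le p I = 1}
          \<subseteq> {I \<in> order_ideals Pc le. toggle_minus Pc le p I = 1}"
    using assms by (auto simp: toggle_plus_def toggle_minus_def order_ideals_def split: if_splits)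
  show "(\<lambda>I. I - {p}) ` {I \<in> order_ideals Pc le. toggle_minus Pc le p I = 1}
          \<subseteq> {I \<in> order_ideals Pc le. toggle_plus Pc le p I = 1}"
    by (auto simp: toggle_plus_def toggle_minus_def order_ideals_def split: if_splits)
qed

lemma expect_toggle_plus:
  "finite Pc \<Longrightarrow> expect Pc le \<mu> (toggle_plus Pc le p)
     = (\<Sum>I\<in>{I \<in> order_ideals Pc le. toggle_plus Pc le p I = 1}. \<mu> I)"
  by (simp add: expect_def toggle_plus_of_bool finite_order_ideals Int_def conj_commute)

lemma expect_toggle_minus:
  "finite Pc \<Longrightarrow> expect Pc le \<mu> (toggle_minus Pc le p)
     = (\<Sum>I\<in>{I \<in> order_ideals Pc le. toggle_minus Pc le p I = 1}. \<mu> I)"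
  by (simp add: expect_def toggle_minus_of_bool finite_order_ideals Int_def conj_commute)

lemma toggle_symmetric_uni:
  assumes "finite Pc"
  shows "toggle_symmetric Pc le (uni Pc le)"
  unfolding toggle_symmetric_def
proof
  fix p assume "p \<in> Pc"
  then have "card {I \<in> order_ideals Pc le. toggle_plus Pc le p I = 1}
           = card {I \<in> order_ideals Pc le. toggle_minus Pc le p I = 1}"
    by (rule bij_betw_same_card[OF bij_betw_insert_toggle])
  then show "expect Pc le (uni Pc le) (toggle_plus Pc le p)
           = expect Pc le (uni Pc le) (toggle_minus Pc le p)"
    using assms by (simp add: expect_toggle_plus expect_toggle_minus uni_def)
qed

lemma expect_toggle_combination:
  assumes fin: "finite Pc" and S: "S \<subseteq> Pc"
    and \<mu>: "is_distribution Pc le \<mu>" "toggle_symmetric Pc le \<mu>"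
    and f: "\<And>I. I \<in> order_ideals Pc le \<Longrightarrow>
              f I = c + (\<Sum>p\<in>S. w p * (toggle_plus Pc le p I - toggle_minus Pc le p I))"
  shows "expect Pc le \<mu> f = c"
proof -
  let ?J = "order_ideals Pc le"
  have "expect Pc le \<mu> f
      = c * (\<Sum>I\<in>?J. \<mu> I) + (\<Sum>p\<in>S. w p * (expect Pc le \<mu> (toggle_plus Pc le p)
                                            - expect Pc le \<mu> (toggle_minus Pc le p)))"
    unfolding expect_def
    by (simp add: f distrib_left sum.distrib sum_distrib_left sum_distrib_right
        sum_subtractf right_diff_distrib sum.swap[of _ S] ac_simps)
  also have "\<dots> = c"
    using \<mu> S by (auto simp: is_distribution_def toggle_symmetric_def intro!: sum.neutral)
  finally show ?thesis .
qed

lemma tCDE_if_ddeg_toggle_combination: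
  assumes "finite Pc" "S \<subseteq> Pc"
    and "\<And>I. I \<in> order_ideals Pc le \<Longrightarrow>
           ddeg Pc le I = c + (\<Sum>p\<in>S. w p * (toggle_plus Pc le p I - toggle_minus Pc le p I))"
  shows "tCDE Pc le \<and> expect Pc le (uni Pc le) (ddeg Pc le) = c"
  using expect_toggle_combination[OF assms(1,2) _ _ assms(3)]
    is_distribution_uni[OF assms(1)] toggle_symmetric_uni[OF assms(1)]
  by (simp add: tCDE_def)

lemma remove_maximal_in_order_ideals:
  assumes "I \<in> order_ideals Pc le" "\<forall>q\<in>I. le p q \<longrightarrow> q = p"
  shows "I - {p} \<in> order_ideals Pc le"
  using assms unfolding order_ideals_def by blast

lemma J_covers_iff_remove_maximal:
  fixes rk :: "'a \<Rightarrow> nat"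
  assumes fin: "finite Pc" and rk: "\<And>x y. le x y \<Longrightarrow> x \<noteq> y \<Longrightarrow> rk x < rk y"
    and I: "I \<in> order_ideals Pc le"
  shows "J_covers Pc le K I \<longleftrightarrow> (\<exists>p\<in>I. (\<forall>q\<in>I. le p q \<longrightarrow> q = p) \<and> K = I - {p})"
proof
  assume cov: "J_covers Pc le K I"
  then have K: "K \<in> order_ideals Pc le" "K \<subset> I"
    unfolding J_covers_def by auto
  have fin_diff: "finite (I - K)"
    using fin I by (auto simp: order_ideals_def intro: finite_subset)
  obtain p where p: "p \<in> I - K" "\<And>q. q \<in> I - K \<Longrightarrow> rk q \<le> rk p"
  proof -
    have "Max (rk ` (I - K)) \<in> rk ` (I - K)"
      using fin_diff K(2) by (intro Max_in) auto
    then obtain p where "p \<in> I - K" "rk p = Max (rk ` (I - K))" by auto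
    with fin_diff show thesis using that by simp
  qed
  have p_max: "\<forall>q\<in>I. le p q \<longrightarrow> q = p"
  proof (intro ballI impI)
    fix q assume q: "q \<in> I" "le p q"
    have "q \<notin> K"
      using q p(1) K(1) I by (auto simp: order_ideals_def)
    show "q = p"
    proof (rule ccontr)
      assume "q \<noteq> p"
      then have "rk p < rk q" using rk q(2) by blast
      moreover have "rk q \<le> rk p" using p(2) q(1) \<open>q \<notin> K\<close> by blast
      ultimately show False by simp
    qed
  qed
  have "I - {p} \<in> order_ideals Pc le" "K \<subseteq> I - {p}"
    using remove_maximal_in_order_ideals[OF I p_max] p(1) K by auto
  then have "K = I - {p}"
    using cov p(1) unfolding J_covers_def by blast
  then show "\<exists>p\<in>I. (\<forall>q\<in>I. le p q \<longrightarrow> q = p) \<and> K = I - {p}"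
    using p(1) p_max by blast
next
  assume "\<exists>p\<in>I. (\<forall>q\<in>I. le p q \<longrightarrow> q = p) \<and> K = I - {p}"
  then show "J_covers Pc le K I"
    using remove_maximal_in_order_ideals[OF I] I unfolding J_covers_def by blast
qed

lemma ddeg_eq_card_maximal:
  fixes rk :: "'a \<Rightarrow> nat"
  assumes "finite Pc" "\<And>x y. le x y \<Longrightarrow> x \<noteq> y \<Longrightarrow> rk x < rk y"
    and "I \<in> order_ideals Pc le"
  shows "ddeg Pc le I = card {p \<in> I. \<forall>q\<in>I. le p q \<longrightarrow> q = p}"
proof -
  have "{K. J_covers Pc le K I} = (\<lambda>p. I - {p}) ` {p \<in> I. \<forall>q\<in>I. le p q \<longrightarrow> q = p}"
    by (auto simp: J_covers_iff_remove_maximal[OF assms])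
  moreover have "inj_on (\<lambda>p. I - {p}) I"
    by (auto simp: inj_on_def)
  ultimately show ?thesis
    unfolding ddeg_def by (simp add: card_image inj_on_subset[of _ I])
qed

definition P_le_explicit :: "nat \<Rightarrow> nat \<Rightarrow> pelem \<Rightarrow> pelem \<Rightarrow> bool" where
  "P_le_explicit a d x y \<longleftrightarrow> x = y \<or> (case x of
     W i \<Rightarrow> 1 \<le> i \<and> i \<le> a \<and>
       (case y of W j \<Rightarrow> i < j \<and> j \<le> a | Z j \<Rightarrow> 1 \<le> j \<and> j \<le> d | _ \<Rightarrow> True)
   | Z i \<Rightarrow> (case y of Z j \<Rightarrow> 1 \<le> i \<and> i < j \<and> j \<le> d | _ \<Rightarrow> False)
   | _ \<Rightarrow> (case y of Z j \<Rightarrow> 1 \<le> j \<and> j \<le> d | _ \<Rightarrow> False))"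

definition ideal_W :: "nat \<Rightarrow> pelem set" where
  "ideal_W k = W ` {1..k}"

definition ideal_X :: "nat \<Rightarrow> pelem set" where
  "ideal_X a = insert X (ideal_W a)"

definition ideal_Y :: "nat \<Rightarrow> pelem set" where
  "ideal_Y a = insert Y (ideal_W a)"

definition ideal_Z :: "nat \<Rightarrow> nat \<Rightarrow> pelem set" where
  "ideal_Z a j = ideal_W a \<union> {X, Y} \<union> Z ` {1..j}"

lemma mem_P_carrier [simp]:
  "W i \<in> P_carrier a d \<longleftrightarrow> 1 \<le> i \<and> i \<le> a" "X \<in> P_carrier a d" "Y \<in> P_carrier a d"
  "Z j \<in> P_carrier a d \<longleftrightarrow> 1 \<le> j \<and> j \<le> d"
  by (auto simp: P_carrier_def)

lemma mem_ideals [simp]: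
  "W i \<in> ideal_W k \<longleftrightarrow> 1 \<le> i \<and> i \<le> k" "X \<notin> ideal_W k" "Y \<notin> ideal_W k" "Z j \<notin> ideal_W k"
  "W i \<in> ideal_X a \<longleftrightarrow> 1 \<le> i \<and> i \<le> a" "X \<in> ideal_X a" "Y \<notin> ideal_X a" "Z j \<notin> ideal_X a"
  "W i \<in> ideal_Y a \<longleftrightarrow> 1 \<le> i \<and> i \<le> a" "X \<notin> ideal_Y a" "Y \<in> ideal_Y a" "Z j \<notin> ideal_Y a"
  "W i \<in> ideal_Z a m \<longleftrightarrow> 1 \<le> i \<and> i \<le> a" "X \<in> ideal_Z a m" "Y \<in> ideal_Z a m"
  "Z j \<in> ideal_Z a m \<longleftrightarrow> 1 \<le> j \<and> j \<le> m"
  by (auto simp: ideal_W_def ideal_X_def ideal_Y_def ideal_Z_def)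

lemma pelem_set_eqI:
  "(\<And>i. W i \<in> A \<longleftrightarrow> W i \<in> B) \<Longrightarrow> (X \<in> A \<longleftrightarrow> X \<in> B) \<Longrightarrow> (Y \<in> A \<longleftrightarrow> Y \<in> B)
    \<Longrightarrow> (\<And>j. Z j \<in> A \<longleftrightarrow> Z j \<in> B) \<Longrightarrow> A = B"
  by (metis pelem.exhaust subsetI subset_antisym)

lemma ideal_W_eq_iff [simp]: "ideal_W i = ideal_W k \<longleftrightarrow> i = k"
proof
  assume "ideal_W i = ideal_W k"
  then have "W (max i k) \<in> ideal_W i \<longleftrightarrow> W (max i k) \<in> ideal_W k" by simp
  then show "i = k" by (cases "k = 0"; cases "i = 0") (auto simp: max_def split: if_splits)
qed simp

lemma ideal_Z_eq_iff [simp]: "ideal_Z a i = ideal_Z a k \<longleftrightarrow> i = k"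
proof
  assume "ideal_Z a i = ideal_Z a k"
  then have "Z (max i k) \<in> ideal_Z a i \<longleftrightarrow> Z (max i k) \<in> ideal_Z a k" by simp
  then show "i = k" by (cases "k = 0"; cases "i = 0") (auto simp: max_def split: if_splits)
qed simp

lemma ideals_distinct [simp]:
  "ideal_X a \<noteq> ideal_W k" "ideal_Y a \<noteq> ideal_W k" "ideal_Z a j \<noteq> ideal_W k"
  "ideal_X a \<noteq> ideal_Y a" "ideal_X a \<noteq> ideal_Z a j" "ideal_Y a \<noteq> ideal_Z a j"
  by (metis mem_ideals)+

declare ideals_distinct [symmetric, simp]

lemma Ball_ideals:
  "(\<forall>q\<in>ideal_W k. P q) \<longleftrightarrow> (\<forall>i. 1 \<le> i \<and> i \<le> k \<longrightarrow> P (W i))"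
  "(\<forall>q\<in>ideal_X a. P q) \<longleftrightarrow> (\<forall>i. 1 \<le> i \<and> i \<le> a \<longrightarrow> P (W i)) \<and> P X"
  "(\<forall>q\<in>ideal_Y a. P q) \<longleftrightarrow> (\<forall>i. 1 \<le> i \<and> i \<le> a \<longrightarrow> P (W i)) \<and> P Y"
  "(\<forall>q\<in>ideal_Z a m. P q) \<longleftrightarrow>
     (\<forall>i. 1 \<le> i \<and> i \<le> a \<longrightarrow> P (W i)) \<and> P X \<and> P Y \<and> (\<forall>j. 1 \<le> j \<and> j \<le> m \<longrightarrow> P (Z j))"
  "(\<forall>q\<in>P_carrier a d - S. P q) \<longleftrightarrow>
     (\<forall>i. 1 \<le> i \<and> i \<le> a \<longrightarrow> W i \<notin> S \<longrightarrow> P (W i)) \<and> (X \<notin> S \<longrightarrow> P X) \<and> (Y \<notin> S \<longrightarrow> P Y)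
     \<and> (\<forall>j. 1 \<le> j \<and> j \<le> d \<longrightarrow> Z j \<notin> S \<longrightarrow> P (Z j))"
  by (auto simp: ideal_W_def ideal_X_def ideal_Y_def ideal_Z_def P_carrier_def)

fun P_rank :: "nat \<Rightarrow> pelem \<Rightarrow> nat" where
  "P_rank a (W i) = i"
| "P_rank a X = a + 1"
| "P_rank a Y = a + 1"
| "P_rank a (Z j) = a + 1 + j"

definition P_toggle_weight :: "pelem \<Rightarrow> real" where
  "P_toggle_weight p = (case p of W _ \<Rightarrow> -1 | _ \<Rightarrow> -1/2)"

lemma sum_W_X_Y:
  "(\<Sum>p\<in>W ` {1..a} \<union> {X, Y}. h p) = (\<Sum>k=1..a. h (W k)) + h X + h Y"
  by (subst sum.union_disjoint) (auto simp: sum.reindex inj_on_def add.assoc)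

context
  fixes a d :: nat
  assumes a: "a \<ge> 1" and d: "d \<ge> 1"
begin

lemma P_explicit_if_rtrancl:
  "(x, y) \<in> (P_cover a d)\<^sup>* \<Longrightarrow> P_le_explicit a d x y"
proof (induction rule: rtrancl_induct)
  case base then show ?case by (simp add: P_le_explicit_def)
next
  case (step y z)
  from step.hyps(2) step.IH show ?case
    using a d by (auto simp: P_cover_def P_le_explicit_def split: pelem.splits)
qed

lemma rtrancl_if_P_explicit:
  assumes "P_le_explicit a d x y"
  shows "(x, y) \<in> (P_cover a d)\<^sup>*"
proof -
  let ?R = "P_cover a d"
  have WW: "(W i, W j) \<in> ?R\<^sup>*" if "1 \<le> i" "i \<le> j" "j \<le> a" for i j
    using that by (intro rtrancl_chain[of i j W]) (auto simp: P_cover_def)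
  have ZZ: "(Z i, Z j) \<in> ?R\<^sup>*" if "1 \<le> i" "i \<le> j" "j \<le> d" for i j
    using that by (intro rtrancl_chain[of i j Z]) (auto simp: P_cover_def)
  have WX: "(W i, X) \<in> ?R\<^sup>*" "(W i, Y) \<in> ?R\<^sup>*" if "1 \<le> i" "i \<le> a" for i
    using WW[OF that(1,2) order_refl] by (auto intro: rtrancl_into_rtrancl simp: P_cover_def)
  have XZ: "(X, Z j) \<in> ?R\<^sup>*" "(Y, Z j) \<in> ?R\<^sup>*" if "1 \<le> j" "j \<le> d" for j
    using ZZ[OF order_refl that] by (auto intro: converse_rtrancl_into_rtrancl simp: P_cover_def)
  have WZ: "(W i, Z j) \<in> ?R\<^sup>*" if "1 \<le> i" "i \<le> a" "1 \<le> j" "j \<le> d" for i j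
    using WX(1)[OF that(1,2)] XZ(1)[OF that(3,4)] by (rule rtrancl_trans)
  show ?thesis
    using assms WW ZZ WX XZ WZ
    by (cases x; cases y) (auto simp: P_le_explicit_def intro: rtrancl_trans)
qed

lemma P_le_iff_explicit: "P_le a d x y \<longleftrightarrow> P_le_explicit a d x y"
  unfolding P_le_def using P_explicit_if_rtrancl rtrancl_if_P_explicit by blast

lemma order_ideal_cases:
  assumes "I \<in> order_ideals (P_carrier a d) (P_le a d)"
  obtains (W) k where "k \<le> a" "I = ideal_W k" | (X) "I = ideal_X a" | (Y) "I = ideal_Y a"
    | (Z) j where "j \<le> d" "I = ideal_Z a j"
proof -
  from assms have sub: "I \<subseteq> P_carrier a d"
    and down: "\<And>x y. x \<in> I \<Longrightarrow> y \<in> P_carrier a d \<Longrightarrow> P_le_explicit a d y x \<Longrightarrow> y \<in> I"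
    unfolding order_ideals_def P_le_iff_explicit by auto
  obtain k where k: "k \<le> a" "{i. W i \<in> I} = {1..k}"
  proof -
    have "\<exists>k\<le>a. {i. W i \<in> I} = {1..k}"
    proof (rule downclosed_subset_atLeastAtMost)
      fix i j assume "i \<in> {i. W i \<in> I}" "1 \<le> j" "j \<le> i"
      moreover then have "i \<le> a" using sub by auto
      ultimately show "j \<in> {i. W i \<in> I}"
        using down[of "W i" "W j"] by (auto simp: P_le_explicit_def le_less)
    qed (use sub in auto)
    with that show thesis by blast
  qed
  obtain j where j: "j \<le> d" "{i. Z i \<in> I} = {1..j}"
  proof -
    have "\<exists>j\<le>d. {i. Z i \<in> I} = {1..j}"
    proof (rule downclosed_subset_atLeastAtMost)
      fix i j assume "i \<in> {i. Z i \<in> I}" "1 \<le> j" "j \<le> i"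
      moreover then have "i \<le> d" using sub by auto
      ultimately show "j \<in> {i. Z i \<in> I}"
        using down[of "Z i" "Z j"] by (auto simp: P_le_explicit_def le_less)
    qed (use sub in auto)
    with that show thesis by blast
  qed
  have WI: "W i \<in> I \<longleftrightarrow> 1 \<le> i \<and> i \<le> k" and ZI: "Z i \<in> I \<longleftrightarrow> 1 \<le> i \<and> i \<le> j" for i
    using k(2) j(2) by (auto simp: set_eq_iff)
  have XY_if_Z: "X \<in> I" "Y \<in> I" if "Z i \<in> I" for i
    using down[of "Z i" X] down[of "Z i" Y] that sub by (auto simp: P_le_explicit_def)
  have top_W_if_XY: "k = a" if "X \<in> I \<or> Y \<in> I"
    using that down[of X "W a"] down[of Y "W a"] a WI k(1) by (auto simp: P_le_explicit_def)
  show thesis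
  proof (cases "X \<in> I"; cases "Y \<in> I")
    assume "X \<in> I" "Y \<in> I"
    then have "I = ideal_Z a j" using top_W_if_XY WI ZI by (intro pelem_set_eqI) auto
    then show thesis using Z j(1) by blast
  next
    assume "X \<in> I" "Y \<notin> I"
    then have "I = ideal_X a" using top_W_if_XY WI ZI XY_if_Z by (intro pelem_set_eqI) auto
    then show thesis using X by blast
  next
    assume "X \<notin> I" "Y \<in> I"
    then have "I = ideal_Y a" using top_W_if_XY WI ZI XY_if_Z by (intro pelem_set_eqI) auto
    then show thesis using Y by blast
  next
    assume "X \<notin> I" "Y \<notin> I"
    then have "I = ideal_W k" using WI ZI XY_if_Z by (intro pelem_set_eqI) auto
    then show thesis using W k(1) by blast
  qed
qed

lemma ddeg_P:
  assumes "I \<in> order_ideals (P_carrier a d) (P_le a d)"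
  shows "ddeg (P_carrier a d) (P_le a d) I
           = of_bool (I \<noteq> ideal_W 0) + of_bool (I = ideal_Z a 0)"
proof -
  have rank: "P_rank a x < P_rank a y" if "P_le a d x y" "x \<noteq> y" for x y
    using that by (cases x; cases y) (auto simp: P_le_iff_explicit P_le_explicit_def)
  have "finite (P_carrier a d)" by (simp add: P_carrier_def)
  note ddeg = ddeg_eq_card_maximal[where rk = "P_rank a", OF this rank assms]
  from assms show ?thesis
  proof (cases rule: order_ideal_cases)
    case (W k)
    have "{p \<in> I. \<forall>q\<in>I. P_le a d p q \<longrightarrow> q = p} = (if k = 0 then {} else {W k})"
      using W
      by (intro pelem_set_eqI; auto simp: Ball_ideals P_le_iff_explicit P_le_explicit_def; presburger)
    then show ?thesis using W ddeg by simp
  next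
    case X
    have "{p \<in> I. \<forall>q\<in>I. P_le a d p q \<longrightarrow> q = p} = {X}"
      using X by (intro pelem_set_eqI) (auto simp: Ball_ideals P_le_iff_explicit P_le_explicit_def)
    then show ?thesis using X ddeg by simp
  next
    case Y
    have "{p \<in> I. \<forall>q\<in>I. P_le a d p q \<longrightarrow> q = p} = {Y}"
      using Y by (intro pelem_set_eqI) (auto simp: Ball_ideals P_le_iff_explicit P_le_explicit_def)
    then show ?thesis using Y ddeg by simp
  next
    case (Z j)
    have "{p \<in> I. \<forall>q\<in>I. P_le a d p q \<longrightarrow> q = p} = (if j = 0 then {X, Y} else {Z j})"
      using Z
      by (intro pelem_set_eqI; auto simp: Ball_ideals P_le_iff_explicit P_le_explicit_def; presburger)
    then show ?thesis using Z ddeg by simp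
  qed
qed

lemma toggle_plus_W_P:
  assumes "I \<in> order_ideals (P_carrier a d) (P_le a d)" "1 \<le> k" "k \<le> a"
  shows "toggle_plus (P_carrier a d) (P_le a d) (W k) I = of_bool (I = ideal_W (k - 1))"
  using assms
  by (cases rule: order_ideal_cases;
      auto simp: toggle_plus_def Ball_ideals P_le_iff_explicit P_le_explicit_def; presburger)

lemma toggle_minus_W_P:
  assumes "I \<in> order_ideals (P_carrier a d) (P_le a d)" "1 \<le> k" "k \<le> a"
  shows "toggle_minus (P_carrier a d) (P_le a d) (W k) I = of_bool (I = ideal_W k)"
  using assms
  by (cases rule: order_ideal_cases;
      auto simp: toggle_minus_def Ball_ideals P_le_iff_explicit P_le_explicit_def; presburger)

lemma toggle_plus_X_P:
  assumes "I \<in> order_ideals (P_carrier a d) (P_le a d)"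
  shows "toggle_plus (P_carrier a d) (P_le a d) X I
           = of_bool (I = ideal_W a) + of_bool (I = ideal_Y a)"
  using assms a
  by (cases rule: order_ideal_cases) (auto simp: toggle_plus_def Ball_ideals P_le_iff_explicit P_le_explicit_def)

lemma toggle_minus_X_P:
  assumes "I \<in> order_ideals (P_carrier a d) (P_le a d)"
  shows "toggle_minus (P_carrier a d) (P_le a d) X I
           = of_bool (I = ideal_X a) + of_bool (I = ideal_Z a 0)"
  using assms a
  by (cases rule: order_ideal_cases) (auto simp: toggle_minus_def Ball_ideals P_le_iff_explicit P_le_explicit_def)

lemma toggle_plus_Y_P:
  assumes "I \<in> order_ideals (P_carrier a d) (P_le a d)"
  shows "toggle_plus (P_carrier a d) (P_le a d) Y I
           = of_bool (I = ideal_W a) + of_bool (I = ideal_X a)"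
  using assms a
  by (cases rule: order_ideal_cases) (auto simp: toggle_plus_def Ball_ideals P_le_iff_explicit P_le_explicit_def)

lemma toggle_minus_Y_P:
  assumes "I \<in> order_ideals (P_carrier a d) (P_le a d)"
  shows "toggle_minus (P_carrier a d) (P_le a d) Y I
           = of_bool (I = ideal_Y a) + of_bool (I = ideal_Z a 0)"
  using assms a
  by (cases rule: order_ideal_cases) (auto simp: toggle_minus_def Ball_ideals P_le_iff_explicit P_le_explicit_def)

lemma ddeg_P_toggle_combination:
  assumes I: "I \<in> order_ideals (P_carrier a d) (P_le a d)"
  shows "ddeg (P_carrier a d) (P_le a d) I = 1 + (\<Sum>p\<in>W ` {1..a} \<union> {X, Y}. P_toggle_weight p *
           (toggle_plus (P_carrier a d) (P_le a d) p I - toggle_minus (P_carrier a d) (P_le a d) p I))"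
proof -
  let ?at = "\<lambda>J. of_bool (I = J) :: real"
  have "(\<Sum>k=1..a. P_toggle_weight (W k) *
           (toggle_plus (P_carrier a d) (P_le a d) (W k) I - toggle_minus (P_carrier a d) (P_le a d) (W k) I))
      = (\<Sum>k=1..a. ?at (ideal_W k) - ?at (ideal_W (k - 1)))"
    by (simp add: P_toggle_weight_def toggle_plus_W_P[OF I] toggle_minus_W_P[OF I])
  also have "\<dots> = ?at (ideal_W a) - ?at (ideal_W 0)"
    using sum_telescope''[of 0 a "\<lambda>k. ?at (ideal_W k)"] by simp
  finally show ?thesis
    unfolding sum_W_X_Y using a
    by (simp add: P_toggle_weight_def toggle_plus_X_P[OF I] toggle_minus_X_P[OF I]
        toggle_plus_Y_P[OF I] toggle_minus_Y_P[OF I] ddeg_P[OF I] of_bool_def)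
qed

end

theorem proposition6p1:
  fixes a d :: nat
  assumes "a \<ge> 1" and "d \<ge> 1"
  shows "tCDE (P_carrier a d) (P_le a d) \<and>
         expect (P_carrier a d) (P_le a d) (uni (P_carrier a d) (P_le a d))
                (ddeg (P_carrier a d) (P_le a d)) = 1"
  by (rule tCDE_if_ddeg_toggle_combination[OF _ _ ddeg_P_toggle_combination[OF assms]])
    (auto simp: P_carrier_def)

end
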